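(* Let $M$ be a JBW$^*$-triple and $T:M\to M$ a bounded linear map which is triple derivable at orthogonal pairs. For each tripotent $e\in M$ put $\xi_e:=\tfrac12\big(P_2(e)T(e)+Q(e)T(e)\big)\in M_2(e)$. Let $e_1,\dots,e_{m_1}$ and $v_1,\dots,v_{m_2}$ be two families of mutually orthogonal tripotents in $M$ and $\lambda_j,\mu_k>0$ with $\sum_{j=1}^{m_1}\lambda_je_j=\sum_{k=1}^{m_2}\mu_kv_k$. Then $\sum_{j=1}^{m_1}\lambda_j\xi_{e_j}=\sum_{k=1}^{m_2}\mu_k\xi_{v_k}$.
   Context: A JB$^*$-triple is a complex Banach space with a continuous triple product $\{\cdot,\cdot,\cdot\}$, bilinear and symmetric in the outer variables and conjugate-linear in the middle one, satisfying the Jordan identity $L(a,b)L(x,y)=L(x,y)L(a,b)+L(L(a,b)x,y)-L(x,L(b,a)y)$, with $L(a,a)$ hermitian of non-negative spectrum and $\|\{a,a,a\}\|=\|a\|^3$, where $L(a,b)x=\{a,b,x\}$; a JBW$^*$-triple is a JB$^*$-triple that is a dual Banach space. Elements $a,b$ are orthogonal ($a\perp b$) if $L(a,b)=0$. A linear map $T$ is triple derivable at orthogonal pairs if $\{T(a),b,c\}+\{a,T(b),c\}+\{a,b,T(c)\}=0$ for all $a,b,c$ with $a\perp b$. A tripotent is $e$ with $\{e,e,e\}=e$; $M_2(e)=\{x:\{e,e,x\}=x\}$, $P_2(e)$ is the Peirce-2 projection, $Q(e)x=\{e,x,e\}$. (By the paper's results, $\xi_e$ is the unique self-adjoint central element of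 the JB$^*$-algebra $M_2(e)$, with product $x\circ_e y=\{x,e,y\}$ and involution $x^{*_e}=\{e,x,e\}$, such that $P_2(e)T(a)-\xi_e\circ_e a$ is a triple derivation of $M_2(e)$.) *)

theory Defs
  imports "HOL-Analysis.Analysis"
begin

text \<open>A complex Banach space is modelled as a real Banach space (type class banach)
  together with a complex scalar multiplication sc extending the real one and
  compatible with the norm.\<close>

definition complex_scalar :: "(complex \<Rightarrow> 'a::real_normed_vector \<Rightarrow> 'a) \<Rightarrow> bool" where
  "complex_scalar sc \<longleftrightarrow>
     (\<forall>c x y. sc c (x + y) = sc c x + sc c y) \<and>
     (\<forall>c d x. sc (c + d) x = sc c x + sc d x) \<and>
     (\<forall>c d x. sc (c * d) x = sc c (sc d x)) \<and>
     (\<forall>r x. sc (complex_of_real r) x = r *\<^sub>R x) \<and>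
     (\<forall>c x. norm (sc c x) = cmod c * norm x)"

definition clinear_map ::
  "(complex \<Rightarrow> 'a::plus \<Rightarrow> 'a) \<Rightarrow> (complex \<Rightarrow> 'b::plus \<Rightarrow> 'b) \<Rightarrow> ('a \<Rightarrow> 'b) \<Rightarrow> bool" where
  "clinear_map sa sb f \<longleftrightarrow>
     (\<forall>x y. f (x + y) = f x + f y) \<and> (\<forall>c x. f (sa c x) = sb c (f x))"

definition bounded_clinear_map ::
  "(complex \<Rightarrow> 'a::real_normed_vector \<Rightarrow> 'a) \<Rightarrow> (complex \<Rightarrow> 'b::real_normed_vector \<Rightarrow> 'b)
     \<Rightarrow> ('a \<Rightarrow> 'b) \<Rightarrow> bool" where
  "bounded_clinear_map sa sb f \<longleftrightarrow>
     clinear_map sa sb f \<and> (\<exists>K. \<forall>x. norm (f x) \<le> K * norm x)"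

definition bounded_cfunctional ::
  "(complex \<Rightarrow> 'p::real_normed_vector \<Rightarrow> 'p) \<Rightarrow> ('p \<Rightarrow> complex) \<Rightarrow> bool" where
  "bounded_cfunctional sp f \<longleftrightarrow> bounded_clinear_map sp (*) f"

definition dual_space_iso ::
  "(complex \<Rightarrow> 'a::real_normed_vector \<Rightarrow> 'a) \<Rightarrow> (complex \<Rightarrow> 'p::real_normed_vector \<Rightarrow> 'p)
     \<Rightarrow> ('a \<Rightarrow> 'p \<Rightarrow> complex) \<Rightarrow> bool" where
  "dual_space_iso sc sp Phi \<longleftrightarrow>
     complex_scalar sp \<and>
     (\<forall>x y. Phi (x + y) = (\<lambda>p. Phi x p + Phi y p)) \<and>
     (\<forall>c x. Phi (sc c x) = (\<lambda>p. c * Phi x p)) \<and>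
     (\<forall>x. bounded_cfunctional sp (Phi x)) \<and>
     (\<forall>x. onorm (Phi x) = norm x) \<and>
     (\<forall>f. bounded_cfunctional sp f \<longrightarrow> (\<exists>x. Phi x = f))"

definition op_exp_it ::
  "(complex \<Rightarrow> 'a::real_normed_vector \<Rightarrow> 'a) \<Rightarrow> ('a \<Rightarrow> 'a) \<Rightarrow> real \<Rightarrow> 'a \<Rightarrow> 'a" where
  "op_exp_it sc A t x = (\<Sum>n. sc ((\<i> * complex_of_real t) ^ n / of_nat (fact n)) ((A ^^ n) x))"

definition hermitian_op :: "(complex \<Rightarrow> 'a::real_normed_vector \<Rightarrow> 'a) \<Rightarrow> ('a \<Rightarrow> 'a) \<Rightarrow> bool" where
  "hermitian_op sc A \<longleftrightarrow> bounded_clinear_map sc sc A \<and>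
     (\<forall>t::real. onorm (op_exp_it sc A t) = 1)"

definition op_spectrum :: "(complex \<Rightarrow> 'a::real_normed_vector \<Rightarrow> 'a) \<Rightarrow> ('a \<Rightarrow> 'a) \<Rightarrow> complex set" where
  "op_spectrum sc A = {c. \<not> (\<exists>S. bounded_clinear_map sc sc S \<and>
        (\<forall>x. S (A x - sc c x) = x) \<and> (\<forall>x. A (S x) - sc c (S x) = x))}"

definition nonneg_spectrum :: "(complex \<Rightarrow> 'a::real_normed_vector \<Rightarrow> 'a) \<Rightarrow> ('a \<Rightarrow> 'a) \<Rightarrow> bool" where
  "nonneg_spectrum sc A \<longleftrightarrow> (\<forall>c \<in> op_spectrum sc A. Im c = 0 \<and> Re c \<ge> 0)"

text \<open>JB*-triple: tp a b c is the triple product {a,b,c}; L a b = tp a b.\<close>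

definition JB_star_triple ::
  "(complex \<Rightarrow> 'a::{real_normed_vector,banach} \<Rightarrow> 'a) \<Rightarrow> ('a \<Rightarrow> 'a \<Rightarrow> 'a \<Rightarrow> 'a) \<Rightarrow> bool" where
  "JB_star_triple sc tp \<longleftrightarrow>
     complex_scalar sc \<and>
     continuous_on UNIV (\<lambda>(a, b, c). tp a b c) \<and>
     (\<forall>b c. clinear_map sc sc (\<lambda>a. tp a b c)) \<and>
     (\<forall>a b. clinear_map sc sc (\<lambda>c. tp a b c)) \<and>
     (\<forall>a c x y. tp a (x + y) c = tp a x c + tp a y c) \<and>
     (\<forall>a c z x. tp a (sc z x) c = sc (cnj z) (tp a x c)) \<and>
     (\<forall>a b c. tp a b c = tp c b a) \<and>
     (\<forall>a b x y z. tp a b (tp x y z) =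
         tp x y (tp a b z) + tp (tp a b x) y z - tp x (tp b a y) z) \<and>
     (\<forall>a. hermitian_op sc (tp a a) \<and> nonneg_spectrum sc (tp a a)) \<and>
     (\<forall>a. norm (tp a a a) = norm a ^ 3)"

text \<open>JBW*-triple: a JB*-triple which is a dual Banach space; the predual type
  'p and the isomorphism Phi are universally quantified in the theorem.\<close>

definition JBW_star_triple ::
  "(complex \<Rightarrow> 'a::{real_normed_vector,banach} \<Rightarrow> 'a) \<Rightarrow> ('a \<Rightarrow> 'a \<Rightarrow> 'a \<Rightarrow> 'a)
     \<Rightarrow> (complex \<Rightarrow> 'p::{real_normed_vector,banach} \<Rightarrow> 'p) \<Rightarrow> ('a \<Rightarrow> 'p \<Rightarrow> complex) \<Rightarrow> bool" where
  "JBW_star_triple sc tp sp Phi \<longleftrightarrow> JB_star_triple sc tp \<and> dual_space_iso sc sp Phi"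

definition triple_orth :: "('a::zero \<Rightarrow> 'a \<Rightarrow> 'a \<Rightarrow> 'a) \<Rightarrow> 'a \<Rightarrow> 'a \<Rightarrow> bool" where
  "triple_orth tp a b \<longleftrightarrow> (\<forall>x. tp a b x = 0)"

definition triple_derivable_orth :: "('a::ab_group_add \<Rightarrow> 'a \<Rightarrow> 'a \<Rightarrow> 'a) \<Rightarrow> ('a \<Rightarrow> 'a) \<Rightarrow> bool" where
  "triple_derivable_orth tp T \<longleftrightarrow>
     (\<forall>a b c. triple_orth tp a b \<longrightarrow> tp (T a) b c + tp a (T b) c + tp a b (T c) = 0)"

definition tripotent :: "('a \<Rightarrow> 'a \<Rightarrow> 'a \<Rightarrow> 'a) \<Rightarrow> 'a \<Rightarrow> bool" where
  "tripotent tp e \<longleftrightarrow> tp e e e = e"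

definition Qop :: "('a \<Rightarrow> 'a \<Rightarrow> 'a \<Rightarrow> 'a) \<Rightarrow> 'a \<Rightarrow> 'a \<Rightarrow> 'a" where
  "Qop tp e x = tp e x e"

definition P2 :: "('a \<Rightarrow> 'a \<Rightarrow> 'a \<Rightarrow> 'a) \<Rightarrow> 'a \<Rightarrow> 'a \<Rightarrow> 'a" where
  "P2 tp e x = Qop tp e (Qop tp e x)"

definition xi :: "('a::real_vector \<Rightarrow> 'a \<Rightarrow> 'a \<Rightarrow> 'a) \<Rightarrow> ('a \<Rightarrow> 'a) \<Rightarrow> 'a \<Rightarrow> 'a" where
  "xi tp T e = (1/2::real) *\<^sub>R (P2 tp e (T e) + Qop tp e (T e))"

end

theory Submission
  imports Defs
begin

(* For orthogonal tripotents e and f, the Jordan identity together with triple derivability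
   of T at the pairs (e, f) and (f, e) gives xi(e + f) = xi(e) + xi(f); hence xi is additive on
   finite orthogonal families. Grouping equal coefficients writes both expansions of
   a = sum lam_j e_j = sum mu_k v_k as sum t E_t and sum t F_t, where E_t and F_t are sums of
   orthogonal tripotents. Both are eigenvectors of L(a, a) for the eigenvalue t^2, and
   eigenvectors for distinct eigenvalues are linearly independent, so E_t = F_t for every t. *)

lemma sum_scaleR_group_by_coefficient:
  fixes g :: "'i \<Rightarrow> 'a::real_vector"
  assumes "finite I" "finite V" "c ` I \<subseteq> V"
  shows "(\<Sum>j\<in>I. c j *\<^sub>R g j) = (\<Sum>t\<in>V. t *\<^sub>R (\<Sum>j\<in>{j\<in>I. c j = t}. g j))"
proof -
  have "(\<Sum>j\<in>I. c j *\<^sub>R g j) = (\<Sum>t\<in>V. \<Sum>j\<in>{j\<in>I. c j = t}. c j *\<^sub>R g j)"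
    using sum.group[OF assms, of "\<lambda>j. c j *\<^sub>R g j"] by simp
  also have "\<dots> = (\<Sum>t\<in>V. \<Sum>j\<in>{j\<in>I. c j = t}. t *\<^sub>R g j)"
    by (intro sum.cong) auto
  also have "\<dots> = (\<Sum>t\<in>V. t *\<^sub>R (\<Sum>j\<in>{j\<in>I. c j = t}. g j))"
    by (simp add: scaleR_sum_right)
  finally show ?thesis .
qed

lemma eigenvectors_sum_eq_0_imp_zero:
  fixes D :: "'a::real_vector \<Rightarrow> 'a"
  assumes "linear D" "finite V" "inj_on c V" "\<forall>t\<in>V. D (x t) = c t *\<^sub>R x t" "sum x V = 0"
  shows "\<forall>t\<in>V. x t = 0"
  using assms(2-5)
proof (induction V arbitrary: x rule: finite_induct)
  case empty
  then show ?case by simp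
next
  case (insert s V)
  have xs: "x s = - sum x V"
    using insert by (simp add: add_eq_0_iff)
  text \<open>Applying D - c s to the relation removes x s.\<close>
  define y where "y t = (c t - c s) *\<^sub>R x t" for t
  have "(\<Sum>t\<in>V. c t *\<^sub>R x t) = D (sum x V)"
    using insert by (simp add: linear_sum[OF assms(1)])
  also have "\<dots> = c s *\<^sub>R sum x V"
    using insert xs linear_neg[OF assms(1), of "sum x V"] by simp
  finally have "sum y V = 0"
    by (simp add: y_def scaleR_diff_left sum_subtractf scaleR_sum_right)
  moreover have "\<forall>t\<in>V. D (y t) = c t *\<^sub>R y t"
    using insert by (simp add: y_def linear_scale[OF assms(1)])
  moreover have "inj_on c V" and distinct: "\<forall>t\<in>V. c t \<noteq> c s"
    using insert.prems(1) insert.hyps(2) by (auto simp: inj_on_insert image_iff)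
  ultimately have "\<forall>t\<in>V. y t = 0"
    using insert.IH by blast
  with distinct have "\<forall>t\<in>V. x t = 0"
    by (simp add: y_def)
  with xs show ?case by simp
qed

locale real_Jordan_triple =
  fixes tp :: "'a::real_vector \<Rightarrow> 'a \<Rightarrow> 'a \<Rightarrow> 'a"
  assumes linear_left: "linear (\<lambda>x. tp x b c)"
    and linear_middle: "linear (\<lambda>y. tp a y c)"
    and linear_right: "linear (tp a b)"
    and commute_outer: "tp a b c = tp c b a"
    and Jordan_identity: "tp a b (tp x y z) = tp x y (tp a b z) + tp (tp a b x) y z - tp x (tp b a y) z"
begin

lemmas add_left = linear_add[OF linear_left]
  and add_middle = linear_add[OF linear_middle]
  and add_right = linear_add[OF linear_right]
  and scaleR_middle = linear_scale[OF linear_middle]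
  and scaleR_right = linear_scale[OF linear_right]
  and minus_middle = linear_neg[OF linear_middle]
  and diff_middle = linear_diff[OF linear_middle]
  and zero_right = linear_0[OF linear_right]
  and sum_left = linear_sum[OF linear_left]
  and sum_middle = linear_sum[OF linear_middle]
  and sum_right = linear_sum[OF linear_right]

lemma orth_left_zero: "triple_orth tp a b \<Longrightarrow> tp a b x = 0"
  by (simp add: triple_orth_def)

lemma orth_right_zero: "triple_orth tp a b \<Longrightarrow> tp x b a = 0"
  by (metis commute_outer orth_left_zero)

lemma Q_add: "tp (e + f) y (e + f) = tp e y e + tp f y f + 2 *\<^sub>R tp e y f"
  by (simp add: add_left add_right scaleR_2 commute_outer[of f y e])

lemma Q_Q_orth_zero:
  assumes "triple_orth tp f e"
  shows "tp f (tp e z e) f = 0"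
  using Jordan_identity[of z e f e f] assms by (simp add: orth_left_zero orth_right_zero zero_right)

lemma L_Q_orth_zero:
  assumes "triple_orth tp f e"
  shows "tp e (tp e w e) f = 0"
proof -
  have "tp e e f = 0" "tp w e f = 0" "tp (tp w e e) e f = 0"
    using assms by (simp_all add: orth_right_zero)
  then show ?thesis
    using Jordan_identity[of w e e e f] by (simp add: zero_right)
qed

lemma Q_L_orth_zero:
  assumes "triple_orth tp e f"
  shows "tp e (tp e x f) e = 0"
  using Jordan_identity[of x e e f e] assms by (simp add: orth_left_zero orth_right_zero zero_right)

lemma L_orth_tripotent:
  assumes "tripotent tp e" and "triple_orth tp f e"
  shows "2 *\<^sub>R tp e (tp e e y) f = tp e y f"
proof -
  have fe: "tp e e f = 0" "tp (tp e y e) e f = 0"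
    using assms(2) by (simp_all add: orth_right_zero)
  have "tp e e (tp e y f) = tp e y (tp e e f) + tp (tp e e e) y f - tp e (tp e e y) f"
    and "tp e y (tp e e f) = tp e e (tp e y f) + tp (tp e y e) e f - tp e (tp y e e) f"
    by (rule Jordan_identity)+
  with fe assms(1) show ?thesis
    by (simp add: tripotent_def commute_outer[of y e e] zero_right scaleR_2 algebra_simps)
qed

lemma tripotent_add_orth:
  assumes "tripotent tp e" "tripotent tp f" "triple_orth tp e f" "triple_orth tp f e"
  shows "tripotent tp (e + f)"
  using assms by (simp add: tripotent_def add_left add_middle add_right orth_left_zero orth_right_zero)

lemma triple_derivable_orth_pair:
  assumes ef: "triple_orth tp e f" and fe: "triple_orth tp f e" and "triple_derivable_orth tp T"
  shows "tp e (T f) e = 0" and "tp f (T e) f = 0"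
    and "tp e (T e) f = - tp e e (T f)" and "tp e (T f) f = - tp f f (T e)"
proof -
  have D: "tp (T a) b c + tp a (T b) c + tp a b (T c) = 0" if "triple_orth tp a b" for a b c
    using assms(3) that by (simp add: triple_derivable_orth_def)
  show "tp e (T f) e = 0" "tp f (T e) f = 0"
    using D[OF ef, of e] D[OF fe, of f] ef fe by (simp_all add: orth_left_zero orth_right_zero)
  show "tp e (T e) f = - tp e e (T f)"
    using D[OF fe, of e] fe by (simp add: orth_left_zero commute_outer[of "T f" e e]
        commute_outer[of f "T e" e] eq_neg_iff_add_eq_0 add.commute)
  show "tp e (T f) f = - tp f f (T e)"
    using D[OF ef, of f] ef by (simp add: orth_left_zero commute_outer[of "T e" f f]
        eq_neg_iff_add_eq_0 add.commute)
qed

lemma xi_add_orth: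
  assumes e: "tripotent tp e" and f: "tripotent tp f"
    and ef: "triple_orth tp e f" and fe: "triple_orth tp f e"
    and "linear T" and der: "triple_derivable_orth tp T"
  shows "xi tp T (e + f) = xi tp T e + xi tp T f"
proof -
  note Tef = triple_derivable_orth_pair(1,2)[OF ef fe der]
    and LTe = triple_derivable_orth_pair(3)[OF ef fe der]
    and LTf = triple_derivable_orth_pair(4)[OF ef fe der]
  define x where "x = T e + T f"
  define c where "c = tp e x f"
  have Tx: "T (e + f) = x"
    using \<open>linear T\<close> by (simp add: x_def linear_add)
  have Qx: "tp (e + f) x (e + f) = tp e (T e) e + tp f (T f) f + 2 *\<^sub>R c"
    by (simp add: Q_add c_def x_def add_middle Tef scaleR_add_right)
  text \<open>The off-diagonal part c of x with respect to e and f is reversed by Q(e + f),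
    so it cancels in xi.\<close>
  have Qc: "tp (e + f) c (e + f) = - c"
  proof -
    have "2 *\<^sub>R tp e c f = - (2 *\<^sub>R tp e (tp e e (T f)) f) - 2 *\<^sub>R tp e (tp f f (T e)) f"
      by (simp add: c_def x_def add_middle add_left add_right LTe LTf diff_middle minus_middle
          scaleR_diff_right)
    also have "\<dots> = - c"
      using L_orth_tripotent[OF e fe, of "T f"] L_orth_tripotent[OF f ef, of "T e"]
      by (simp add: c_def x_def add_middle commute_outer[of f _ e])
    finally have "2 *\<^sub>R tp e c f = - c" .
    then show ?thesis
      using Q_L_orth_zero[OF ef, of x] Q_L_orth_zero[OF fe, of x]
      by (simp add: Q_add c_def commute_outer[of f _ e])
  qed
  have Q_diag: "tp (e + f) (tp e (T e) e + tp f (T f) f) (e + f)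
      = tp e (tp e (T e) e) e + tp f (tp f (T f) f) f"
    using Q_Q_orth_zero[OF fe] Q_Q_orth_zero[OF ef] L_Q_orth_zero[OF fe] L_Q_orth_zero[OF ef]
    unfolding add_middle Q_add by (simp add: commute_outer[of f _ e])
  have P2x: "P2 tp (e + f) x = tp e (tp e (T e) e) e + tp f (tp f (T f) f) f - 2 *\<^sub>R c"
    unfolding P2_def Qop_def Qx add_middle[of "e + f" _ "2 *\<^sub>R c"] scaleR_middle Q_diag Qc
    by simp
  show ?thesis
    unfolding xi_def Tx P2x Qop_def[of tp "e + f"] Qx
    by (simp add: P2_def Qop_def algebra_simps)
qed

lemma orth_sum_right: "\<forall>j\<in>S. triple_orth tp a (e j) \<Longrightarrow> triple_orth tp a (sum e S)"
  by (simp add: triple_orth_def sum_middle)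

lemma orth_sum_left: "\<forall>j\<in>S. triple_orth tp (e j) a \<Longrightarrow> triple_orth tp (sum e S) a"
  by (simp add: triple_orth_def sum_left)

lemma tripotent_sum_orth:
  assumes "finite I" "\<forall>j\<in>I. tripotent tp (e j)" "pairwise (\<lambda>j k. triple_orth tp (e j) (e k)) I"
  shows "tripotent tp (sum e I)"
  using assms
proof (induction I rule: finite_induct)
  case empty
  then show ?case by (simp add: tripotent_def zero_right)
next
  case (insert k I)
  then show ?case
    by (auto simp: pairwise_insert intro!: tripotent_add_orth orth_sum_right orth_sum_left)
qed

lemma xi_sum_orth:
  assumes "finite I" "\<forall>j\<in>I. tripotent tp (e j)" "pairwise (\<lambda>j k. triple_orth tp (e j) (e k)) I"
    and "linear T" "triple_derivable_orth tp T"
  shows "xi tp T (sum e I) = (\<Sum>j\<in>I. xi tp T (e j))"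
  using assms(1-3)
proof (induction I rule: finite_induct)
  case empty
  then show ?case
    using \<open>linear T\<close> by (simp add: xi_def P2_def Qop_def linear_0 zero_right)
next
  case (insert k I)
  then have orth: "triple_orth tp (e k) (sum e I)" "triple_orth tp (sum e I) (e k)"
    and tri: "tripotent tp (e k)" "tripotent tp (sum e I)"
    by (auto simp: pairwise_insert intro!: tripotent_sum_orth orth_sum_right orth_sum_left)
  with insert show ?case
    by (simp add: pairwise_insert xi_add_orth[OF tri orth assms(4,5)])
qed

lemma L_orth_sum_eigenvector:
  assumes "\<forall>j\<in>I. tripotent tp (e j)" "pairwise (\<lambda>j k. triple_orth tp (e j) (e k)) I"
    and a: "a = (\<Sum>j\<in>I. lam j *\<^sub>R e j)" and "finite I" "k \<in> I"
  shows "tp a a (e k) = (lam k)\<^sup>2 *\<^sub>R e k"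
proof -
  have orth: "triple_orth tp (e j) (e k)" "triple_orth tp (e k) (e j)" if "j \<in> I" "j \<noteq> k" for j
    using assms(2,5) that by (auto simp: pairwise_def)
  have left: "tp (e k) a y = lam k *\<^sub>R tp (e k) (e k) y" for y
  proof -
    have "tp (e k) a y = (\<Sum>j\<in>I. if j = k then lam k *\<^sub>R tp (e k) (e k) y else 0)"
      unfolding a sum_middle scaleR_middle using orth by (intro sum.cong) (auto simp: orth_left_zero)
    with assms(4,5) show ?thesis by simp
  qed
  have right: "tp (e k) (e k) a = lam k *\<^sub>R e k"
  proof -
    have "tp (e k) (e k) a = (\<Sum>j\<in>I. if j = k then lam k *\<^sub>R e k else 0)"
      unfolding a sum_right scaleR_right using orth assms(1)
      by (intro sum.cong) (auto simp: orth_right_zero tripotent_def)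
    with assms(4,5) show ?thesis by simp
  qed
  have "tp a a (e k) = tp (e k) a a" by (rule commute_outer)
  also have "\<dots> = (lam k)\<^sup>2 *\<^sub>R e k" by (simp add: left right scaleR_right power2_eq_square)
  finally show ?thesis .
qed

lemma L_orth_sum_eigenvector_level:
  assumes "\<forall>j\<in>I. tripotent tp (e j)" "pairwise (\<lambda>j k. triple_orth tp (e j) (e k)) I"
    and "a = (\<Sum>j\<in>I. lam j *\<^sub>R e j)" and "finite I"
  shows "tp a a (\<Sum>j\<in>{j\<in>I. lam j = t}. e j) = t\<^sup>2 *\<^sub>R (\<Sum>j\<in>{j\<in>I. lam j = t}. e j)"
  using L_orth_sum_eigenvector[OF assms] by (simp add: sum_right scaleR_sum_right)

lemma orth_expansion_level_sums_unique:
  assumes "finite I" "\<forall>j\<in>I. tripotent tp (e j)" "pairwise (\<lambda>j k. triple_orth tp (e j) (e k)) I"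
    and "finite J" "\<forall>k\<in>J. tripotent tp (v k)" "pairwise (\<lambda>j k. triple_orth tp (v j) (v k)) J"
    and lam: "\<forall>j\<in>I. lam j > 0" and mu: "\<forall>k\<in>J. mu k > 0"
    and a: "(\<Sum>j\<in>I. lam j *\<^sub>R e j) = (\<Sum>k\<in>J. mu k *\<^sub>R v k)"
  shows "(\<Sum>j\<in>{j\<in>I. lam j = t}. e j) = (\<Sum>k\<in>{k\<in>J. mu k = t}. v k)"
proof -
  define V where "V = lam ` I \<union> mu ` J"
  define E where "E t = (\<Sum>j\<in>{j\<in>I. lam j = t}. e j)" for t
  define F where "F t = (\<Sum>k\<in>{k\<in>J. mu k = t}. v k)" for t
  have V: "finite V" "lam ` I \<subseteq> V" "mu ` J \<subseteq> V" "\<forall>t\<in>V. t > 0"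
    using assms(1,4) lam mu by (auto simp: V_def)
  text \<open>E t and F t are both eigenvectors of L(a, a) for the eigenvalue t^2, and the
    eigenvalues t^2 are distinct because all t are positive.\<close>
  define x where "x t = t *\<^sub>R (E t - F t)" for t
  have "\<forall>t\<in>V. x t = 0"
  proof (rule eigenvectors_sum_eq_0_imp_zero[OF linear_right V(1)])
    show "inj_on power2 V"
      using V(4) by (auto intro!: inj_onI simp: power2_eq_iff_nonneg less_imp_le)
    show "\<forall>t\<in>V. tp (\<Sum>j\<in>I. lam j *\<^sub>R e j) (\<Sum>j\<in>I. lam j *\<^sub>R e j) (x t) = t\<^sup>2 *\<^sub>R x t"
      using L_orth_sum_eigenvector_level[OF assms(2,3) refl assms(1)]
        L_orth_sum_eigenvector_level[OF assms(5,6) a assms(4)]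
      by (simp add: x_def E_def F_def scaleR_right linear_diff[OF linear_right] scaleR_diff_right
          mult.commute)
    show "sum x V = 0"
      using a sum_scaleR_group_by_coefficient[OF assms(1) V(1,2), of e]
        sum_scaleR_group_by_coefficient[OF assms(4) V(1,3), of v]
      by (simp add: x_def E_def F_def scaleR_diff_right sum_subtractf)
  qed
  moreover have "E t = 0" "F t = 0" if "t \<notin> V"
    using that V(2,3) by (auto simp: E_def F_def intro!: sum.neutral)
  ultimately have "E t = F t"
    using V(4) by (cases "t \<in> V") (force simp: x_def)+
  then show ?thesis
    by (simp add: E_def F_def)
qed

lemma xi_orth_expansion_well_defined:
  assumes "finite I" "\<forall>j\<in>I. tripotent tp (e j)" "pairwise (\<lambda>j k. triple_orth tp (e j) (e k)) I"
    and "finite J" "\<forall>k\<in>J. tripotent tp (v k)" "pairwise (\<lambda>j k. triple_orth tp (v j) (v k)) J"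
    and "\<forall>j\<in>I. lam j > 0" "\<forall>k\<in>J. mu k > 0"
    and "(\<Sum>j\<in>I. lam j *\<^sub>R e j) = (\<Sum>k\<in>J. mu k *\<^sub>R v k)"
    and T: "linear T" "triple_derivable_orth tp T"
  shows "(\<Sum>j\<in>I. lam j *\<^sub>R xi tp T (e j)) = (\<Sum>k\<in>J. mu k *\<^sub>R xi tp T (v k))"
proof -
  define V where "V = lam ` I \<union> mu ` J"
  have V: "finite V" "lam ` I \<subseteq> V" "mu ` J \<subseteq> V"
    using assms(1,4) by (auto simp: V_def)
  have "(\<Sum>j\<in>I. lam j *\<^sub>R xi tp T (e j)) = (\<Sum>t\<in>V. t *\<^sub>R xi tp T (\<Sum>j\<in>{j\<in>I. lam j = t}. e j))"
    using assms(1-3) T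
    by (simp add: sum_scaleR_group_by_coefficient[OF assms(1) V(1,2)] xi_sum_orth pairwise_subset)
  also have "\<dots> = (\<Sum>t\<in>V. t *\<^sub>R xi tp T (\<Sum>k\<in>{k\<in>J. mu k = t}. v k))"
    by (simp add: orth_expansion_level_sums_unique[OF assms(1-9)])
  also have "\<dots> = (\<Sum>k\<in>J. mu k *\<^sub>R xi tp T (v k))"
    using assms(4-6) T
    by (simp add: sum_scaleR_group_by_coefficient[OF assms(4) V(1,3)] xi_sum_orth pairwise_subset)
  finally show ?thesis .
qed

end

lemma clinear_map_linear:
  assumes "complex_scalar sa" "complex_scalar sb" "clinear_map sa sb f"
  shows "linear f"
proof (rule linearI)
  fix x y and r :: real
  show "f (x + y) = f x + f y"
    using assms(3) by (simp add: clinear_map_def)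
  have "f (sa (complex_of_real r) x) = sb (complex_of_real r) (f x)"
    using assms(3) by (simp add: clinear_map_def)
  then show "f (r *\<^sub>R x) = r *\<^sub>R f x"
    using assms(1,2) by (simp add: complex_scalar_def)
qed

lemma JB_star_triple_real_Jordan_triple:
  assumes "JB_star_triple sc tp"
  shows "real_Jordan_triple tp"
proof -
  have sc: "complex_scalar sc"
    and left: "\<And>b c. clinear_map sc sc (\<lambda>a. tp a b c)"
    and right: "\<And>a b. clinear_map sc sc (tp a b)"
    and middle_add: "\<And>a c y y'. tp a (y + y') c = tp a y c + tp a y' c"
    and middle_scale: "\<And>a c z y. tp a (sc z y) c = sc (cnj z) (tp a y c)"
    and commute: "\<And>a b c. tp a b c = tp c b a"
    and Jordan: "\<And>a b x y z. tp a b (tp x y z) = tp x y (tp a b z) + tp (tp a b x) y z - tp x (tp b a y) z"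
    using assms unfolding JB_star_triple_def by (elim conjE; fast)+
  have middle: "linear (\<lambda>y. tp a y c)" for a c
  proof (rule linearI)
    fix y y' and r :: real
    show "tp a (y + y') c = tp a y c + tp a y' c"
      by (rule middle_add)
    show "tp a (r *\<^sub>R y) c = r *\<^sub>R tp a y c"
      using middle_scale[of a "complex_of_real r" y c] sc by (simp add: complex_scalar_def)
  qed
  show ?thesis
    using clinear_map_linear[OF sc sc left] middle clinear_map_linear[OF sc sc right] commute Jordan
    by (rule real_Jordan_triple.intro)
qed

theorem mainTheorem13:
  fixes sc :: "complex \<Rightarrow> 'a::{real_normed_vector,banach} \<Rightarrow> 'a"
    and tp :: "'a \<Rightarrow> 'a \<Rightarrow> 'a \<Rightarrow> 'a"
    and sp :: "complex \<Rightarrow> 'p::{real_normed_vector,banach} \<Rightarrow> 'p"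
    and Phi :: "'a \<Rightarrow> 'p \<Rightarrow> complex"
    and T :: "'a \<Rightarrow> 'a"
    and e v :: "nat \<Rightarrow> 'a"
    and lam mu :: "nat \<Rightarrow> real"
    and m1 m2 :: nat
  assumes "JBW_star_triple sc tp sp Phi"
    and "bounded_clinear_map sc sc T"
    and "triple_derivable_orth tp T"
    and "\<forall>j<m1. tripotent tp (e j)"
    and "\<forall>j<m1. \<forall>k<m1. j \<noteq> k \<longrightarrow> triple_orth tp (e j) (e k)"
    and "\<forall>k<m2. tripotent tp (v k)"
    and "\<forall>j<m2. \<forall>k<m2. j \<noteq> k \<longrightarrow> triple_orth tp (v j) (v k)"
    and "\<forall>j<m1. lam j > 0"
    and "\<forall>k<m2. mu k > 0"
    and "(\<Sum>j<m1. lam j *\<^sub>R e j) = (\<Sum>k<m2. mu k *\<^sub>R v k)"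
  shows "(\<Sum>j<m1. lam j *\<^sub>R xi tp T (e j)) = (\<Sum>k<m2. mu k *\<^sub>R xi tp T (v k))"
proof -
  have JB: "JB_star_triple sc tp"
    using assms(1) by (simp add: JBW_star_triple_def)
  then interpret real_Jordan_triple tp
    by (rule JB_star_triple_real_Jordan_triple)
  have sc: "complex_scalar sc"
    using JB by (simp add: JB_star_triple_def)
  have "linear T"
    using assms(2) clinear_map_linear[OF sc sc] by (simp add: bounded_clinear_map_def)
  with assms(3-10) show ?thesis
    by (intro xi_orth_expansion_well_defined) (auto simp: pairwise_def)
qed

end
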